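(* Let $H$ be a real or complex Hilbert space of dimension $n$, let $N\ge n$, let $F=\{f_i\}_{i=1}^N$ be a frame for $H$ with frame operator $S_F$, and let $\{q_i\}_{i=1}^N$ be a weight number sequence. Set $c=\max\{q_i\|f_i\|\,\|S_F^{-1}f_i\|:1\le i\le N\}$, $\varrho_1=\{i:q_i\|f_i\|\,\|S_F^{-1}f_i\|=c\}$, $\varrho_2=\{1,\dots,N\}\setminus\varrho_1$, and $H_j=\operatorname{span}\{f_i:i\in\varrho_j\}$ for $j=1,2$. If $H_1\cap H_2=\{0\}$, then the canonical dual $\{S_F^{-1}f_i\}_{i=1}^N$ is a 1-erasure probabilistic optimal dual of $F$.
   Context: Inner products are linear in the first argument. A frame for $H$ is a finite sequence spanning $H$. Analysis operator: $\Theta_F f=(\langle f,f_i\rangle)_i$. Synthesis operator: $\Theta_G^*(c)=\sum_ic_ig_i$. Frame operator: $S_F=\Theta_F^*\Theta_F$. A dual of $F$ is a frame $G=\{g_i\}_{i=1}^N$ with $f=\sum_i\langle f,f_i\rangle g_i=\sum_i\langle f,g_i\rangle f_i$ for all $f$. A probability sequence satisfies $0\le p_i\le1$ and $\sum p_i=1$. Weight numbers: $q_i=\frac{\sum_jp_j}{\sum_jp_j-p_i}\cdot\frac{N-1}{n}$ (assumed well defined). $\mathcal{D}_1^p$ is the set of $N\times N$ diagonal matrices with exactly one nonzero diagonal entry, equal to $q_i$ in position $(i,i)$. $d_1^p(F,G)=\max\{\|\Theta_G^*D\Theta_F\|:D\in\mathcal{D}_1^p\}$ (operator norm); this equals $\max_i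 q_i\|f_i\|\,\|g_i\|$. A dual $G$ of $F$ is a 1-erasure probabilistic optimal dual of $F$ if $d_1^p(F,G)=\inf\{d_1^p(F,G'):G'\text{ a dual of }F\}$. *)

theory Defs
  imports "HOL-Analysis.Analysis"
begin

text \<open>The n-dimensional Hilbert space H is modelled (up to isometric isomorphism) as
  'k^'n with 'k = real or 'k = complex and the standard inner product, linear in the
  first argument.  The frame is indexed by 0..N-1.  All notions below are parametrised
  by the inner product ip.\<close>

definition rip :: "real^'n \<Rightarrow> real^'n \<Rightarrow> real" where
  "rip x y = (\<Sum>i\<in>UNIV. x$i * y$i)"

definition cip :: "complex^'n \<Rightarrow> complex^'n \<Rightarrow> complex" where
  "cip x y = (\<Sum>i\<in>UNIV. x$i * cnj (y$i))"

definition is_frame :: "nat \<Rightarrow> (nat \<Rightarrow> 'k::field^'n) \<Rightarrow> bool" where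
  "is_frame N F \<longleftrightarrow> vec.span (F ` {..<N}) = UNIV"

definition analysis_op :: "('k^'n \<Rightarrow> 'k^'n \<Rightarrow> 'k) \<Rightarrow> nat \<Rightarrow> (nat \<Rightarrow> 'k::field^'n) \<Rightarrow> 'k^'n \<Rightarrow> (nat \<Rightarrow> 'k)" where
  "analysis_op ip N F f = (\<lambda>i. if i < N then ip f (F i) else 0)"

definition synthesis_op :: "nat \<Rightarrow> (nat \<Rightarrow> 'k::field^'n) \<Rightarrow> (nat \<Rightarrow> 'k) \<Rightarrow> 'k^'n" where
  "synthesis_op N G c = (\<Sum>i<N. c i *s G i)"

definition frame_op :: "('k^'n \<Rightarrow> 'k^'n \<Rightarrow> 'k) \<Rightarrow> nat \<Rightarrow> (nat \<Rightarrow> 'k::field^'n) \<Rightarrow> 'k^'n \<Rightarrow> 'k^'n" where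
  "frame_op ip N F = synthesis_op N F \<circ> analysis_op ip N F"

definition canonical_dual :: "('k^'n \<Rightarrow> 'k^'n \<Rightarrow> 'k) \<Rightarrow> nat \<Rightarrow> (nat \<Rightarrow> 'k::field^'n) \<Rightarrow> nat \<Rightarrow> 'k^'n" where
  "canonical_dual ip N F = (\<lambda>i. inv (frame_op ip N F) (F i))"

definition is_dual :: "('k^'n \<Rightarrow> 'k^'n \<Rightarrow> 'k) \<Rightarrow> nat \<Rightarrow> (nat \<Rightarrow> 'k::field^'n) \<Rightarrow> (nat \<Rightarrow> 'k^'n) \<Rightarrow> bool" where
  "is_dual ip N F G \<longleftrightarrow> is_frame N G \<and>
     (\<forall>f. f = (\<Sum>i<N. ip f (F i) *s G i) \<and> f = (\<Sum>i<N. ip f (G i) *s F i))"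

definition prob_seq :: "nat \<Rightarrow> (nat \<Rightarrow> real) \<Rightarrow> bool" where
  "prob_seq N p \<longleftrightarrow> (\<forall>i<N. 0 \<le> p i \<and> p i \<le> 1) \<and> (\<Sum>i<N. p i) = 1"

definition weight :: "nat \<Rightarrow> nat \<Rightarrow> (nat \<Rightarrow> real) \<Rightarrow> nat \<Rightarrow> real" where
  "weight n N p i = (\<Sum>j<N. p j) / ((\<Sum>j<N. p j) - p i) * (real N - 1) / real n"

text \<open>The diagonal matrix in D_1^p whose only nonzero entry is q_i at position (i,i),
  acting on sequences.\<close>
definition diag1 :: "nat \<Rightarrow> nat \<Rightarrow> (nat \<Rightarrow> real) \<Rightarrow> nat \<Rightarrow> (nat \<Rightarrow> 'k::real_normed_algebra_1) \<Rightarrow> (nat \<Rightarrow> 'k)" where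
  "diag1 n N p i c = (\<lambda>j. if j = i then of_real (weight n N p i) * c j else 0)"

definition d1p :: "('k^'n \<Rightarrow> 'k^'n \<Rightarrow> 'k) \<Rightarrow> nat \<Rightarrow> (nat \<Rightarrow> real) \<Rightarrow> (nat \<Rightarrow> 'k::{field,real_normed_algebra_1}^'n) \<Rightarrow> (nat \<Rightarrow> 'k^'n) \<Rightarrow> real" where
  "d1p ip N p F G = Max ((\<lambda>i. onorm (synthesis_op N G \<circ> diag1 CARD('n) N p i \<circ> analysis_op ip N F)) ` {..<N})"

definition prob_optimal_dual :: "('k^'n \<Rightarrow> 'k^'n \<Rightarrow> 'k) \<Rightarrow> nat \<Rightarrow> (nat \<Rightarrow> real) \<Rightarrow> (nat \<Rightarrow> 'k::{field,real_normed_algebra_1}^'n) \<Rightarrow> (nat \<Rightarrow> 'k^'n) \<Rightarrow> bool" where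
  "prob_optimal_dual ip N p F G \<longleftrightarrow> is_dual ip N F G \<and>
     d1p ip N p F G = Inf {d1p ip N p F G' | G'. is_dual ip N F G'}"

definition split_condition :: "('k^'n \<Rightarrow> 'k^'n \<Rightarrow> 'k) \<Rightarrow> nat \<Rightarrow> (nat \<Rightarrow> real) \<Rightarrow> (nat \<Rightarrow> 'k::{field,real_normed_algebra_1}^'n) \<Rightarrow> bool" where
  "split_condition ip N p F \<longleftrightarrow>
    (let a = (\<lambda>i. weight CARD('n) N p i * norm (F i) * norm (canonical_dual ip N F i));
         c = Max (a ` {..<N});
         \<rho>1 = {i\<in>{..<N}. a i = c};
         \<rho>2 = {..<N} - \<rho>1
     in vec.span (F ` \<rho>1) \<inter> vec.span (F ` \<rho>2) = {0})"

end

theory Submission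
  imports Defs
begin

text \<open>Let \<open>G\<close> be any dual of \<open>F\<close> and \<open>v\<^sub>i = S\<^sub>F\<^sup>-\<^sup>1 f\<^sub>i\<close>. Both reconstruct every \<open>f\<close>:
  \<open>\<Sum>\<^sub>i \<langle>f,g\<^sub>i\<rangle> f\<^sub>i = f = \<Sum>\<^sub>i \<langle>f,v\<^sub>i\<rangle> f\<^sub>i\<close>. Since \<open>H\<^sub>1 \<inter> H\<^sub>2 = {0}\<close>, the parts of the two sums
  over \<open>\<rho>\<^sub>1\<close> already agree. Applying \<open>S\<^sub>F\<^sup>-\<^sup>1\<close> and taking traces gives
  \<open>\<Sum>\<^sub>i\<^sub>\<in>\<^sub>\<rho>\<^sub>1 \<langle>v\<^sub>i,g\<^sub>i\<rangle> = \<Sum>\<^sub>i\<^sub>\<in>\<^sub>\<rho>\<^sub>1 \<parallel>v\<^sub>i\<parallel>\<^sup>2\<close>, so by Cauchy-Schwarz \<open>\<parallel>v\<^sub>i\<parallel> \<le> \<parallel>g\<^sub>i\<parallel>\<close> for some \<open>i \<in> \<rho>\<^sub>1\<close>.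
  As \<open>d\<^sub>1\<^sup>p(F,G) = max\<^sub>i q\<^sub>i \<parallel>f\<^sub>i\<parallel> \<parallel>g\<^sub>i\<parallel>\<close>, this gives \<open>d\<^sub>1\<^sup>p(F,G) \<ge> q\<^sub>i \<parallel>f\<^sub>i\<parallel> \<parallel>v\<^sub>i\<parallel> = c = d\<^sub>1\<^sup>p(F,{v\<^sub>i})\<close>.\<close>

lemma power2_norm_vec: "norm (x::'a::real_normed_vector^'n) ^ 2 = (\<Sum>i\<in>UNIV. norm (x$i) ^ 2)"
  by (simp add: norm_vec_def L2_set_def sum_nonneg)

lemma norm_vector_smult: "norm (a *s (x::'k::real_normed_field^'n)) = norm a * norm x"
  by (simp add: norm_vec_def norm_mult L2_set_right_distrib)

lemma scaleR_eq_of_real_smult: "r *\<^sub>R x = of_real r *s (x::'k::real_normed_algebra_1^'n)"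
  by (simp add: vec_eq_iff of_real_def)

lemma sum_eq_on_subset_if_span_inter_zero:
  fixes F :: "nat \<Rightarrow> 'k::field^'n"
  assumes "R \<subseteq> A" "finite A"
    and "(\<Sum>i\<in>A. a i *s F i) = (\<Sum>i\<in>A. b i *s F i)"
    and "vec.span (F ` R) \<inter> vec.span (F ` (A - R)) = {0}"
  shows "(\<Sum>i\<in>R. a i *s F i) = (\<Sum>i\<in>R. b i *s F i)"
proof -
  have span_sum: "(\<Sum>i\<in>B. c i *s F i) \<in> vec.span (F ` B)" for B c
    by (intro vec.span_sum vec.span_scale vec.span_base) auto
  define c where "c i = a i - b i" for i
  have diff: "(\<Sum>i\<in>B. c i *s F i) = (\<Sum>i\<in>B. a i *s F i) - (\<Sum>i\<in>B. b i *s F i)" for B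
    by (simp add: c_def vector_sub_rdistrib sum_subtractf)
  have "(\<Sum>i\<in>A. c i *s F i) = 0"
    using assms(3) by (simp add: diff)
  then have "(\<Sum>i\<in>A - R. c i *s F i) + (\<Sum>i\<in>R. c i *s F i) = 0"
    by (simp add: sum.subset_diff[OF assms(1,2)])
  then have "(\<Sum>i\<in>R. c i *s F i) = - (\<Sum>i\<in>A - R. c i *s F i)"
    by (simp add: eq_neg_iff_add_eq_0 add.commute)
  then have "(\<Sum>i\<in>R. c i *s F i) \<in> vec.span (F ` (A - R))"
    by (simp add: vec.span_neg span_sum)
  then have "(\<Sum>i\<in>R. c i *s F i) = 0"
    using assms(4) span_sum by blast
  then show ?thesis
    by (simp add: diff)
qed

lemma weight_nonneg:
  assumes "prob_seq N p" "i < N" "(\<Sum>j<N. p j) - p i \<noteq> 0"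
  shows "0 \<le> weight n N p i"
proof -
  have "(\<Sum>j<N. p j) = 1" "p i \<le> 1"
    using assms(1,2) by (auto simp: prob_seq_def)
  with assms(2,3) show ?thesis
    by (simp add: weight_def)
qed

definition conj_ip :: "('k::field \<Rightarrow> 'k) \<Rightarrow> 'k^'n \<Rightarrow> 'k^'n \<Rightarrow> 'k" where
  "conj_ip cj x y = (\<Sum>i\<in>UNIV. x$i * cj (y$i))"

text \<open>\<open>conj_ip id\<close> and \<open>conj_ip cnj\<close> are the inner products of the real and the complex case;
  the locale axiomatises what the argument needs of the conjugation.\<close>

locale conjugation =
  fixes cj :: "'k::real_normed_field \<Rightarrow> 'k"
  assumes cj_add: "cj (a + b) = cj a + cj b"
    and cj_mult: "cj (a * b) = cj a * cj b"
    and cj_cj [simp]: "cj (cj a) = a"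
    and mult_cj_self: "a * cj a = of_real (norm a ^ 2)"
begin

abbreviation ip :: "'k^'n \<Rightarrow> 'k^'n \<Rightarrow> 'k" where
  "ip \<equiv> conj_ip cj"

lemma cj_0 [simp]: "cj 0 = 0"
  using cj_add[of 0 0] by simp

lemma cj_sum: "cj (sum f A) = (\<Sum>x\<in>A. cj (f x))"
  by (induction A rule: infinite_finite_induct) (auto simp: cj_add)

lemma norm_cj [simp]: "norm (cj a) = norm a"
proof -
  have "(of_real (norm (cj a) ^ 2) :: 'k) = of_real (norm a ^ 2)"
    by (metis cj_cj mult_cj_self mult.commute)
  then have "norm (cj a) ^ 2 = norm a ^ 2"
    by (simp only: of_real_eq_iff)
  then show ?thesis
    by (simp add: power2_eq_iff_nonneg)
qed

lemma ip_add_left: "ip (x + y) z = ip x z + ip y z"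
  by (simp add: conj_ip_def distrib_right sum.distrib)

lemma ip_scale_left: "ip (a *s x) z = a * ip x z"
  by (simp add: conj_ip_def sum_distrib_left mult.assoc)

lemma ip_zero_left [simp]: "ip 0 z = 0"
  by (simp add: conj_ip_def)

lemma ip_sum_left: "ip (sum f A) z = (\<Sum>x\<in>A. ip (f x) z)"
  by (induction A rule: infinite_finite_induct) (auto simp: ip_add_left)

lemma ip_commute: "ip x y = cj (ip y x)"
  by (simp add: conj_ip_def cj_sum cj_mult mult.commute)

lemma ip_self: "ip x x = of_real (norm x ^ 2)"
  by (simp add: conj_ip_def mult_cj_self power2_norm_vec)

lemma norm_ip_le: "norm (ip x y) \<le> norm x * norm y"
proof -
  have "norm (ip x y) \<le> (\<Sum>i\<in>UNIV. norm (x$i * cj (y$i)))"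
    unfolding conj_ip_def by (rule norm_sum)
  also have "\<dots> = (\<Sum>i\<in>UNIV. norm (x$i) * norm (y$i))"
    by (simp add: norm_mult)
  also have "\<dots> \<le> L2_set (\<lambda>i. norm (x$i)) UNIV * L2_set (\<lambda>i. norm (y$i)) UNIV"
    using L2_set_mult_ineq[of "\<lambda>i. norm (x$i)" "\<lambda>i. norm (y$i)" UNIV] by simp
  finally show ?thesis
    by (simp add: norm_vec_def)
qed

lemma ip_axis_left: "ip (axis k 1) y = cj (y $ k)"
proof -
  have "axis k 1 $ i * cj (y $ i) = (if i = k then cj (y $ k) else 0)" for i
    by (simp add: axis_def)
  then show ?thesis
    by (simp add: conj_ip_def)
qed

lemma trace_rank_one_sum:
  "(\<Sum>k\<in>UNIV. (\<Sum>i\<in>R. ip (axis k 1) (g i) *s h i) $ k) = (\<Sum>i\<in>R. ip (h i) (g i))"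
proof -
  have "(\<Sum>k\<in>UNIV. (\<Sum>i\<in>R. ip (axis k 1) (g i) *s h i) $ k)
      = (\<Sum>k\<in>UNIV. \<Sum>i\<in>R. cj (g i $ k) * h i $ k)"
    by (simp add: sum_component ip_axis_left)
  also have "\<dots> = (\<Sum>i\<in>R. \<Sum>k\<in>UNIV. h i $ k * cj (g i $ k))"
    by (subst sum.swap) (simp add: mult.commute)
  finally show ?thesis
    by (simp add: conj_ip_def)
qed

lemma ip_sum_eq_if_rank_one_sums_eq:
  assumes "\<And>f. (\<Sum>i\<in>R. ip f (g i) *s h i) = (\<Sum>i\<in>R. ip f (g' i) *s h' i)"
  shows "(\<Sum>i\<in>R. ip (h i) (g i)) = (\<Sum>i\<in>R. ip (h' i) (g' i))"
  by (simp only: trace_rank_one_sum[symmetric] assms)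

lemma bounded_linear_rank_one: "bounded_linear (\<lambda>x. ip x f *s g)"
proof (rule bounded_linear_intro[where K = "norm f * norm g"])
  show "ip (x + y) f *s g = ip x f *s g + ip y f *s g" for x y
    by (simp add: ip_add_left vector_sadd_rdistrib)
  show "ip (r *\<^sub>R x) f *s g = r *\<^sub>R (ip x f *s g)" for r x
    by (simp add: scaleR_eq_of_real_smult ip_scale_left)
  show "norm (ip x f *s g) \<le> norm x * (norm f * norm g)" for x
    using mult_right_mono[OF norm_ip_le[of x f] norm_ge_zero[of g]]
    by (simp add: norm_vector_smult mult.assoc)
qed

lemma onorm_rank_one: "onorm (\<lambda>x. ip x f *s g) = norm f * norm g"
proof (rule antisym)
  show "onorm (\<lambda>x. ip x f *s g) \<le> norm f * norm g"
  proof (rule onorm_le)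
    fix x
    have "norm (ip x f *s g) \<le> norm x * norm f * norm g"
      using mult_right_mono[OF norm_ip_le[of x f] norm_ge_zero[of g]]
    by (simp add: norm_vector_smult)
    then show "norm (ip x f *s g) \<le> norm f * norm g * norm x"
      by (simp add: mult_ac)
  qed
  have "norm f * norm g * norm f = norm (ip f f *s g)"
    by (simp add: norm_vector_smult ip_self norm_mult power2_eq_square)
  also have "\<dots> \<le> onorm (\<lambda>x. ip x f *s g) * norm f"
    by (rule onorm[OF bounded_linear_rank_one])
  finally show "norm f * norm g \<le> onorm (\<lambda>x. ip x f *s g)"
    by (cases "f = 0") (simp_all add: onorm_pos_le[OF bounded_linear_rank_one] mult.commute)
qed

lemma frame_op_apply: "frame_op ip N F x = (\<Sum>i<N. ip x (F i) *s F i)"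
  by (simp add: frame_op_def synthesis_op_def analysis_op_def)

lemma linear_frame_op: "Vector_Spaces.linear (*s) (*s) (frame_op ip N F)"
  by (simp add: Vector_Spaces.linear_iff vec.vector_space_axioms frame_op_apply ip_add_left
      ip_scale_left vector_sadd_rdistrib sum.distrib vec.scale_sum_right)

lemma ip_frame_op_left: "ip (frame_op ip N F x) y = (\<Sum>i<N. ip x (F i) * ip (F i) y)"
  by (simp add: frame_op_apply ip_sum_left ip_scale_left)

lemma frame_op_self_adjoint: "ip (frame_op ip N F x) y = ip x (frame_op ip N F y)"
proof -
  have "ip x (frame_op ip N F y) = cj (ip (frame_op ip N F y) x)"
    by (rule ip_commute)
  also have "\<dots> = (\<Sum>i<N. cj (ip y (F i)) * cj (ip (F i) x))"
    by (simp add: ip_frame_op_left cj_sum cj_mult)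
  also have "\<dots> = (\<Sum>i<N. ip x (F i) * ip (F i) y)"
    by (simp add: ip_commute[of "F i" y for i] ip_commute[of x "F i" for i] mult.commute)
  finally show ?thesis
    by (simp add: ip_frame_op_left)
qed

lemma ip_frame_op_self: "ip (frame_op ip N F x) x = of_real (\<Sum>i<N. norm (ip x (F i)) ^ 2)"
  by (simp add: ip_frame_op_left ip_commute[of "F i" x for i] mult_cj_self)

lemma ip_eq_0_on_span:
  assumes "y \<in> vec.span (F ` {..<N})" and "\<And>i. i < N \<Longrightarrow> ip (F i) z = 0"
  shows "ip y z = 0"
  using assms(1)
proof (induction rule: vec.span_induct_alt)
  case base
  then show ?case by simp
next
  case (step c x y)
  then show ?case
    using assms(2) by (auto simp: ip_add_left ip_scale_left)
qed

lemma inj_frame_op: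
  assumes "is_frame N F"
  shows "inj (frame_op ip N F)"
proof -
  have "z = 0" if "frame_op ip N F z = 0" for z
  proof -
    have "of_real (\<Sum>i<N. norm (ip z (F i)) ^ 2) = ip (frame_op ip N F z) z"
      by (rule ip_frame_op_self[symmetric])
    also have "\<dots> = 0"
      by (simp add: that)
    finally have "(\<Sum>i<N. norm (ip z (F i)) ^ 2) = 0"
      by (simp only: of_real_eq_0_iff)
    then have orthogonal: "ip (F i) z = 0" if "i < N" for i
      using that by (subst ip_commute) (simp add: sum_nonneg_eq_0_iff)
    have "z \<in> vec.span (F ` {..<N})"
      using assms by (simp add: is_frame_def)
    then have "ip z z = 0"
      using orthogonal by (rule ip_eq_0_on_span)
    then show "z = 0"
      by (simp add: ip_self)
  qed
  then show ?thesis
    by (simp add: vec.linear_inj_iff_eq_0[OF linear_frame_op])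
qed

context
  fixes N :: nat and F :: "nat \<Rightarrow> 'k^'n"
  assumes frame: "is_frame N F"
begin

lemma frame_op_inv_frame_op [simp]: "frame_op ip N F (inv (frame_op ip N F) x) = x"
  using vec.linear_inj_imp_surj[OF linear_frame_op inj_frame_op[OF frame]]
  by (simp add: surj_f_inv_f)

lemma inv_frame_op_frame_op [simp]: "inv (frame_op ip N F) (frame_op ip N F x) = x"
  using inj_frame_op[OF frame] by simp

lemma linear_inv_frame_op: "Vector_Spaces.linear (*s) (*s) (inv (frame_op ip N F))"
  by (rule vec.inj_linear_imp_inv_linear[OF linear_frame_op inj_frame_op[OF frame]])

lemma inv_frame_op_self_adjoint:
  "ip (inv (frame_op ip N F) x) y = ip x (inv (frame_op ip N F) y)"
  by (metis frame_op_inv_frame_op frame_op_self_adjoint)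

lemma inv_frame_op_sum:
  "inv (frame_op ip N F) (\<Sum>i\<in>A. c i *s F i) = (\<Sum>i\<in>A. c i *s canonical_dual ip N F i)"
  by (simp add: vec.linear_sum[OF linear_inv_frame_op] vec.linear_scale[OF linear_inv_frame_op]
      canonical_dual_def)

lemma canonical_dual_expansion: "f = (\<Sum>i<N. ip f (F i) *s canonical_dual ip N F i)"
  using inv_frame_op_sum[of "\<lambda>i. ip f (F i)" "{..<N}"] by (simp flip: frame_op_apply)

lemma canonical_dual_reconstruction: "f = (\<Sum>i<N. ip f (canonical_dual ip N F i) *s F i)"
  using frame_op_apply[of N F "inv (frame_op ip N F) f"]
  by (simp add: inv_frame_op_self_adjoint canonical_dual_def)

lemma is_dual_canonical_dual: "is_dual ip N F (canonical_dual ip N F)"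
proof -
  have "f \<in> vec.span (canonical_dual ip N F ` {..<N})" for f
    by (subst canonical_dual_expansion)
      (intro vec.span_sum vec.span_scale vec.span_base; simp)
  then show ?thesis
    unfolding is_dual_def is_frame_def
    using canonical_dual_expansion canonical_dual_reconstruction by auto
qed

end

lemma erasure_op_eq_rank_one:
  assumes "i < N"
  shows "synthesis_op N G \<circ> diag1 m N p i \<circ> analysis_op ip N F
    = (\<lambda>x. ip x (F i) *s (of_real (weight m N p i) *s G i))"
proof
  fix x
  have "(synthesis_op N G \<circ> diag1 m N p i \<circ> analysis_op ip N F) x
      = (\<Sum>j<N. if j = i then ip x (F i) *s (of_real (weight m N p i) *s G i) else 0)"
    unfolding synthesis_op_def o_def
    by (rule sum.cong) (auto simp: diag1_def analysis_op_def mult.commute)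
  also have "\<dots> = ip x (F i) *s (of_real (weight m N p i) *s G i)"
    using assms by simp
  finally show "(synthesis_op N G \<circ> diag1 m N p i \<circ> analysis_op ip N F) x
      = ip x (F i) *s (of_real (weight m N p i) *s G i)" .
qed

lemma d1p_eq_Max:
  fixes F G :: "nat \<Rightarrow> 'k^'n"
  shows "d1p ip N p F G = Max ((\<lambda>i. \<bar>weight CARD('n) N p i\<bar> * norm (F i) * norm (G i)) ` {..<N})"
proof -
  have "onorm (synthesis_op N G \<circ> diag1 CARD('n) N p i \<circ> analysis_op ip N F)
      = \<bar>weight CARD('n) N p i\<bar> * norm (F i) * norm (G i)" if "i < N" for i
    using that by (simp only: erasure_op_eq_rank_one onorm_rank_one) (simp add: norm_vector_smult)
  then show ?thesis
    unfolding d1p_def by (intro arg_cong[where f = Max] image_cong) auto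
qed

lemma sum_ip_dual_eq_sum_ip_canonical_dual:
  assumes frame: "is_frame N F" and dual: "is_dual ip N F G" and "R \<subseteq> {..<N}"
    and span_inter: "vec.span (F ` R) \<inter> vec.span (F ` ({..<N} - R)) = {0}"
  defines "v \<equiv> canonical_dual ip N F"
  shows "(\<Sum>i\<in>R. ip (v i) (G i)) = (\<Sum>i\<in>R. ip (v i) (v i))"
proof -
  have "(\<Sum>i<N. ip f (G i) *s F i) = (\<Sum>i<N. ip f (v i) *s F i)" for f
    using dual canonical_dual_reconstruction[OF frame] by (simp add: is_dual_def v_def)
  then have on_R: "(\<Sum>i\<in>R. ip f (G i) *s F i) = (\<Sum>i\<in>R. ip f (v i) *s F i)" for f
    by (rule sum_eq_on_subset_if_span_inter_zero[OF assms(3) finite_lessThan _ span_inter])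
  have "(\<Sum>i\<in>R. ip f (G i) *s v i) = (\<Sum>i\<in>R. ip f (v i) *s v i)" for f
    using arg_cong[OF on_R[of f], where f = "inv (frame_op ip N F)"]
    by (simp only: inv_frame_op_sum[OF frame] v_def)
  then show ?thesis
    by (rule ip_sum_eq_if_rank_one_sums_eq)
qed

lemma exists_canonical_dual_norm_le:
  assumes frame: "is_frame N F" and dual: "is_dual ip N F G" and "R \<subseteq> {..<N}" "R \<noteq> {}"
    and span_inter: "vec.span (F ` R) \<inter> vec.span (F ` ({..<N} - R)) = {0}"
  shows "\<exists>i\<in>R. norm (canonical_dual ip N F i) \<le> norm (G i)"
proof -
  define v where "v = canonical_dual ip N F"
  have "finite R"
    using assms(3) finite_subset by blast
  have "(\<Sum>i\<in>R. ip (v i) (v i)) = of_real (\<Sum>i\<in>R. norm (v i) ^ 2)"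
    by (simp add: ip_self)
  then have "(\<Sum>i\<in>R. norm (v i) ^ 2) = norm (\<Sum>i\<in>R. ip (v i) (v i))"
    by (simp add: sum_nonneg del: of_real_sum)
  also have "\<dots> = norm (\<Sum>i\<in>R. ip (v i) (G i))"
    using sum_ip_dual_eq_sum_ip_canonical_dual[OF assms(1-3) span_inter] by (simp add: v_def)
  also have "\<dots> \<le> (\<Sum>i\<in>R. norm (v i) * norm (G i))"
    by (intro order_trans[OF norm_sum] sum_mono norm_ip_le)
  finally have sum_le: "(\<Sum>i\<in>R. norm (v i) ^ 2) \<le> (\<Sum>i\<in>R. norm (v i) * norm (G i))" .
  have "\<exists>i\<in>R. norm (v i) ^ 2 \<le> norm (v i) * norm (G i)"
  proof (rule ccontr)
    assume "\<not> ?thesis"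
    then have "(\<Sum>i\<in>R. norm (v i) * norm (G i)) < (\<Sum>i\<in>R. norm (v i) ^ 2)"
      by (intro sum_strict_mono[OF \<open>finite R\<close> \<open>R \<noteq> {}\<close>]) (auto simp: not_le)
    with sum_le show False
      by linarith
  qed
  then obtain i where "i \<in> R" "norm (v i) ^ 2 \<le> norm (v i) * norm (G i)"
    by blast
  then have "norm (v i) \<le> norm (G i)"
    by (cases "v i = 0") (auto simp: power2_eq_square mult_le_cancel_left_pos)
  with \<open>i \<in> R\<close> show ?thesis
    unfolding v_def by blast
qed

lemma d1p_canonical_dual_le:
  fixes F G :: "nat \<Rightarrow> 'k^'n"
  assumes frame: "is_frame N F" and dual: "is_dual ip N F G" and "R \<subseteq> {..<N}" "R \<noteq> {}"
    and span_inter: "vec.span (F ` R) \<inter> vec.span (F ` ({..<N} - R)) = {0}"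
    and nonneg: "\<And>i. i < N \<Longrightarrow> 0 \<le> weight CARD('n) N p i"
    and maximal: "\<And>i. i \<in> R \<Longrightarrow> d1p ip N p F (canonical_dual ip N F)
      \<le> weight CARD('n) N p i * norm (F i) * norm (canonical_dual ip N F i)"
  shows "d1p ip N p F (canonical_dual ip N F) \<le> d1p ip N p F G"
proof -
  obtain i where "i \<in> R" and norm_le: "norm (canonical_dual ip N F i) \<le> norm (G i)"
    using exists_canonical_dual_norm_le[OF assms(1-5)] by blast
  with assms(3) have "i < N"
    by blast
  have "d1p ip N p F (canonical_dual ip N F)
      \<le> weight CARD('n) N p i * norm (F i) * norm (canonical_dual ip N F i)"
    using maximal[OF \<open>i \<in> R\<close>] .
  also have "\<dots> \<le> \<bar>weight CARD('n) N p i\<bar> * norm (F i) * norm (G i)"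
    using norm_le nonneg[OF \<open>i < N\<close>] by (simp add: mult_left_mono)
  also have "\<dots> \<le> d1p ip N p F G"
    using \<open>i < N\<close> by (simp add: d1p_eq_Max)
  finally show ?thesis .
qed

theorem canonical_dual_prob_optimal_dual:
  fixes F :: "nat \<Rightarrow> 'k^'n"
  assumes "CARD('n) \<le> N" and frame: "is_frame N F" and "prob_seq N p"
    and "\<forall>i<N. (\<Sum>j<N. p j) - p i \<noteq> 0" and "split_condition ip N p F"
  shows "prob_optimal_dual ip N p F (canonical_dual ip N F)"
proof -
  define a where "a i = weight CARD('n) N p i * norm (F i) * norm (canonical_dual ip N F i)" for i
  define R where "R = {i\<in>{..<N}. a i = Max (a ` {..<N})}"
  have span_inter: "vec.span (F ` R) \<inter> vec.span (F ` ({..<N} - R)) = {0}"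
    using assms(5) by (simp add: split_condition_def Let_def a_def R_def)
  have weights_nonneg: "0 \<le> weight CARD('n) N p i" if "i < N" for i
    using weight_nonneg[OF assms(3) that] assms(4) that by simp
  then have d1p_canonical: "d1p ip N p F (canonical_dual ip N F) = Max (a ` {..<N})"
    unfolding d1p_eq_Max a_def by (intro arg_cong[where f = Max] image_cong) simp_all
  have "0 < N"
    using assms(1) by (metis less_le_trans zero_less_card_finite)
  then have "Max (a ` {..<N}) \<in> a ` {..<N}"
    by (intro Max_in) auto
  then have "R \<noteq> {}"
    by (auto simp: R_def)
  have "R \<subseteq> {..<N}"
    by (auto simp: R_def)
  have maximal: "d1p ip N p F (canonical_dual ip N F)
      \<le> weight CARD('n) N p i * norm (F i) * norm (canonical_dual ip N F i)" if "i \<in> R" for i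
    using that by (simp add: R_def d1p_canonical flip: a_def)
  have "d1p ip N p F (canonical_dual ip N F) \<le> d1p ip N p F G" if "is_dual ip N F G" for G
    using d1p_canonical_dual_le[OF frame that \<open>R \<subseteq> {..<N}\<close> \<open>R \<noteq> {}\<close> span_inter
        weights_nonneg maximal] .
  then have "Inf {d1p ip N p F G | G. is_dual ip N F G} = d1p ip N p F (canonical_dual ip N F)"
    using is_dual_canonical_dual[OF frame] by (intro cInf_eq_minimum) blast+
  then show ?thesis
    using is_dual_canonical_dual[OF frame] by (simp add: prob_optimal_dual_def)
qed

end

lemma rip_eq_conj_ip: "rip = conj_ip id"
  by (intro ext) (simp add: rip_def conj_ip_def)

lemma cip_eq_conj_ip: "cip = conj_ip cnj"
  by (intro ext) (simp add: cip_def conj_ip_def)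

interpretation real_conjugation: conjugation "id :: real \<Rightarrow> real"
  by unfold_locales (simp_all add: power2_eq_square)

interpretation complex_conjugation: conjugation cnj
  by unfold_locales (simp_all flip: complex_norm_square)

theorem proposition4p1:
  fixes N :: nat
  shows
  "(\<forall>(F :: nat \<Rightarrow> real^'n) (p :: nat \<Rightarrow> real).
      CARD('n) \<le> N \<and> is_frame N F \<and> prob_seq N p \<and>
      (\<forall>i<N. (\<Sum>j<N. p j) - p i \<noteq> 0) \<and> split_condition rip N p F
      \<longrightarrow> prob_optimal_dual rip N p F (canonical_dual rip N F))
   \<and>
   (\<forall>(F :: nat \<Rightarrow> complex^'n) (p :: nat \<Rightarrow> real).
      CARD('n) \<le> N \<and> is_frame N F \<and> prob_seq N p \<and>
      (\<forall>i<N. (\<Sum>j<N. p j) - p i \<noteq> 0) \<and> split_condition cip N p F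
      \<longrightarrow> prob_optimal_dual cip N p F (canonical_dual cip N F))"
  unfolding rip_eq_conj_ip cip_eq_conj_ip
  using real_conjugation.canonical_dual_prob_optimal_dual
    complex_conjugation.canonical_dual_prob_optimal_dual
  by blast

end
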